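(* Let $M$ be a matroid on the edge set $E$ of a graph $G=(V,E)$, with rank function $r$. Suppose every circuit $C$ of $M$ induces a $2$-connected subgraph $(V(C),C)$ of $G$. Let $X\subseteq E$ be a connected set of $M$. Then $$\sum_{v\in V(X)}\min\{d_B(v): B\text{ a base of }X\}\le 2(r(X)+1)-|V(X)|.$$
   Context: $V(X)$ is the set of vertices incident with edges of $X$. $d_B(v)$ is the number of edges of $B$ incident with $v$. A base of $X$ is a maximal independent subset of $X$. A set $X$ is connected in $M$ if $M|_X$ is connected, i.e. every two distinct elements of $X$ lie in a common circuit contained in $X$. *)

theory Defs
  imports Main
begin

definition matroid :: "'e set \<Rightarrow> ('e set \<Rightarrow> bool) \<Rightarrow> bool" where
  "matroid E indep \<longleftrightarrow>
     finite E \<and>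
     (\<forall>I. indep I \<longrightarrow> I \<subseteq> E) \<and>
     indep {} \<and>
     (\<forall>I J. indep J \<and> I \<subseteq> J \<longrightarrow> indep I) \<and>
     (\<forall>I J. indep I \<and> indep J \<and> card I < card J \<longrightarrow>
        (\<exists>x\<in>J - I. indep (insert x I)))"

definition rank :: "('e set \<Rightarrow> bool) \<Rightarrow> 'e set \<Rightarrow> nat" where
  "rank indep X = Max {card I | I. I \<subseteq> X \<and> indep I}"

definition circuit :: "'e set \<Rightarrow> ('e set \<Rightarrow> bool) \<Rightarrow> 'e set \<Rightarrow> bool" where
  "circuit E indep C \<longleftrightarrow> C \<subseteq> E \<and> \<not> indep C \<and> (\<forall>D. D \<subset> C \<longrightarrow> indep D)"

definition base_of :: "('e set \<Rightarrow> bool) \<Rightarrow> 'e set \<Rightarrow> 'e set \<Rightarrow> bool" where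
  "base_of indep X B \<longleftrightarrow> B \<subseteq> X \<and> indep B \<and>
     (\<forall>B'. B \<subset> B' \<and> B' \<subseteq> X \<longrightarrow> \<not> indep B')"

definition connected_set :: "'e set \<Rightarrow> ('e set \<Rightarrow> bool) \<Rightarrow> 'e set \<Rightarrow> bool" where
  "connected_set E indep X \<longleftrightarrow> X \<subseteq> E \<and>
     (\<forall>e\<in>X. \<forall>f\<in>X. e \<noteq> f \<longrightarrow> (\<exists>C. circuit E indep C \<and> C \<subseteq> X \<and> e \<in> C \<and> f \<in> C))"

section \<open>Graphs: finite loopless multigraphs, edge e has endpoint set ends e\<close>

definition graph :: "'v set \<Rightarrow> 'e set \<Rightarrow> ('e \<Rightarrow> 'v set) \<Rightarrow> bool" where
  "graph V E ends \<longleftrightarrow> finite V \<and> finite E \<and> (\<forall>e\<in>E. ends e \<subseteq> V \<and> card (ends e) = 2)"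

definition Vset :: "('e \<Rightarrow> 'v set) \<Rightarrow> 'e set \<Rightarrow> 'v set" where
  "Vset ends X = (\<Union>e\<in>X. ends e)"

definition deg :: "('e \<Rightarrow> 'v set) \<Rightarrow> 'e set \<Rightarrow> 'v \<Rightarrow> nat" where
  "deg ends B v = card {e\<in>B. v \<in> ends e}"

definition adj :: "('e \<Rightarrow> 'v set) \<Rightarrow> 'e set \<Rightarrow> ('v \<times> 'v) set" where
  "adj ends F = {(u, w). \<exists>e\<in>F. ends e = {u, w}}"

text \<open>The graph (W, F) is connected (assuming edges of F have ends in W).\<close>
definition graph_connected :: "('e \<Rightarrow> 'v set) \<Rightarrow> 'v set \<Rightarrow> 'e set \<Rightarrow> bool" where
  "graph_connected ends W F \<longleftrightarrow>
     (\<forall>u\<in>W. \<forall>w\<in>W. (u, w) \<in> (adj ends F)\<^sup>*)"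

text \<open>2-connected (Diestel): at least 3 vertices, connected, and deleting any vertex
  (with its incident edges) leaves a connected graph.\<close>
definition two_connected :: "('e \<Rightarrow> 'v set) \<Rightarrow> 'v set \<Rightarrow> 'e set \<Rightarrow> bool" where
  "two_connected ends W F \<longleftrightarrow>
     finite W \<and> card W \<ge> 3 \<and> (\<forall>e\<in>F. ends e \<subseteq> W) \<and>
     graph_connected ends W F \<and>
     (\<forall>v\<in>W. graph_connected ends (W - {v}) {e\<in>F. v \<notin> ends e})"

end

theory Submission
  imports Defs
begin

(*
  Write delta(v) for the set of edges at v. Extending a base of X - delta(v) to a base B of X
  gives d_B(v) <= r(X) - r(X - delta(v)), so it suffices to bound the sum Phi(X) of these rank
  drops over V(X) by 2(r(X) + 1) - |V(X)|.

  This bound holds for a single edge and survives adding an ear. Given Y, let C be a circuit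
  meeting both Y and X - Y with |C - Y| minimal, and P = C - Y. Minimality makes K Un Q independent
  for every base K of Y and proper subset Q of P, so r((Y Un P) - delta(v)) is at least
  r(Y - delta(v)) + |P| - max(d_P(v), 1); on the other hand r(Y Un P) <= r(Y) + |P| - 1 since C is
  dependent, and P and Y share at least two vertices since C induces a 2-connected graph. Summing
  over the vertices with the handshake identity carries the bound from Y to Y Un P.
*)

section \<open>Matroids\<close>

lemma exists_proper_subset_avoiding:
  assumes "finite P" "P \<noteq> {}"
  obtains Q where "Q \<subset> P" "Q \<inter> S = {}" "card Q + max (card (P \<inter> S)) 1 = card P"
proof (cases "P \<inter> S = {}")
  case True
  obtain p where "p \<in> P"
    using assms(2) by blast
  show thesis
  proof (rule that)
    show "P - {p} \<subset> P" "(P - {p}) \<inter> S = {}"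
      using True \<open>p \<in> P\<close> by blast+
    show "card (P - {p}) + max (card (P \<inter> S)) 1 = card P"
      using True card.remove[OF assms(1) \<open>p \<in> P\<close>] by simp
  qed
next
  case False
  show thesis
  proof (rule that)
    show "P - S \<subset> P" "(P - S) \<inter> S = {}"
      using False by blast+
    have "card (P \<inter> S) \<ge> 1"
      using False assms(1) by (simp add: Suc_le_eq card_gt_0_iff)
    then show "card (P - S) + max (card (P \<inter> S)) 1 = card P"
      using card_Int_Diff[OF assms(1), of S] by simp
  qed
qed

locale finite_matroid =
  fixes E :: "'e set" and indep :: "'e set \<Rightarrow> bool"
  assumes matroid: "matroid E indep"
begin

lemma finite_ground: "finite E"
  using matroid unfolding matroid_def by blast

lemma indep_subset_ground: "indep I \<Longrightarrow> I \<subseteq> E"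
  using matroid unfolding matroid_def by blast

lemma indep_finite: "indep I \<Longrightarrow> finite I"
  using indep_subset_ground finite_ground finite_subset by blast

lemma indep_subset: "indep J \<Longrightarrow> I \<subseteq> J \<Longrightarrow> indep I"
  using matroid unfolding matroid_def by blast

lemma indep_empty: "indep {}"
  using matroid unfolding matroid_def by blast

lemma indep_augment:
  "indep I \<Longrightarrow> indep J \<Longrightarrow> card I < card J \<Longrightarrow> \<exists>x\<in>J - I. indep (insert x I)"
  using matroid unfolding matroid_def by blast

lemma circuit_not_indep: "circuit E indep C \<Longrightarrow> \<not> indep C"
  unfolding circuit_def by blast

lemma circuit_psubset_indep: "circuit E indep C \<Longrightarrow> D \<subset> C \<Longrightarrow> indep D"
  unfolding circuit_def by blast

lemma circuit_finite: "circuit E indep C \<Longrightarrow> finite C"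
  unfolding circuit_def using finite_ground finite_subset by blast

lemma finite_indep_cards: "finite {card I | I. I \<subseteq> S \<and> indep I}"
proof -
  have "{card I | I. I \<subseteq> S \<and> indep I} \<subseteq> card ` Pow E"
    using indep_subset_ground by blast
  then show ?thesis
    using finite_ground finite_subset by blast
qed

lemma card_le_rank: "indep I \<Longrightarrow> I \<subseteq> S \<Longrightarrow> card I \<le> rank indep S"
  unfolding rank_def using finite_indep_cards by (intro Max_ge) auto

lemma exists_indep_card_rank: "\<exists>I. I \<subseteq> S \<and> indep I \<and> card I = rank indep S"
proof -
  have "{card I | I. I \<subseteq> S \<and> indep I} \<noteq> {}"
    using indep_empty by blast
  from Max_in[OF finite_indep_cards this] show ?thesis
    unfolding rank_def by auto
qed

lemma indep_extends_to_base:
  assumes "indep I" "I \<subseteq> S"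
  obtains B where "base_of indep S B" "I \<subseteq> B"
proof -
  let ?A = "{J. I \<subseteq> J \<and> J \<subseteq> S \<and> indep J}"
  have "?A \<subseteq> Pow E"
    using indep_subset_ground by blast
  then have "finite ?A"
    using finite_ground finite_subset by blast
  moreover have "?A \<noteq> {}"
    using assms by blast
  ultimately obtain B where B: "B \<in> ?A" and maximal: "\<forall>J\<in>?A. B \<subseteq> J \<longrightarrow> B = J"
    by (meson finite_has_maximal)
  have "base_of indep S B"
    unfolding base_of_def
  proof (intro conjI allI impI)
    fix J
    assume "B \<subset> J \<and> J \<subseteq> S"
    then show "\<not> indep J"
      using B maximal by blast
  qed (use B in auto)
  with B show thesis
    using that by blast
qed

lemma card_base:
  assumes "base_of indep S B"
  shows "card B = rank indep S"
proof -
  have B: "B \<subseteq> S" "indep B" and maximal: "\<And>J. B \<subset> J \<Longrightarrow> J \<subseteq> S \<Longrightarrow> \<not> indep J"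
    using assms unfolding base_of_def by auto
  obtain I where I: "I \<subseteq> S" "indep I" "card I = rank indep S"
    using exists_indep_card_rank by blast
  have "\<not> card B < card I"
  proof
    assume "card B < card I"
    then obtain x where "x \<in> I - B" "indep (insert x B)"
      using indep_augment B I by blast
    then show False
      using maximal[of "insert x B"] B I by blast
  qed
  moreover have "card B \<le> rank indep S"
    using card_le_rank B by blast
  ultimately show ?thesis
    using I by linarith
qed

lemma dependent_contains_circuit:
  assumes "\<not> indep D" "D \<subseteq> E"
  obtains C where "C \<subseteq> D" "circuit E indep C"
proof -
  let ?A = "{C. C \<subseteq> D \<and> \<not> indep C}"
  have "finite D"
    using finite_ground assms(2) finite_subset by blast
  then have "finite ?A"
    by simp
  moreover have "?A \<noteq> {}"
    using assms by blast
  ultimately obtain C where C: "C \<in> ?A" and minimal: "\<forall>C'\<in>?A. C' \<subseteq> C \<longrightarrow> C = C'"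
    by (meson finite_has_minimal)
  have "circuit E indep C"
    unfolding circuit_def using C minimal assms(2) by auto
  with C show thesis
    using that by blast
qed

lemma exists_base_card_Int_le:
  obtains B where "base_of indep X B" "card (B \<inter> S) + rank indep (X - S) \<le> rank indep X"
proof -
  obtain K where K: "base_of indep (X - S) K"
    using indep_extends_to_base[OF indep_empty] by blast
  then have "indep K" "K \<subseteq> X - S"
    unfolding base_of_def by auto
  then obtain B where B: "base_of indep X B" "K \<subseteq> B"
    using indep_extends_to_base by blast
  have "finite B"
    using B indep_finite unfolding base_of_def by blast
  then have "card B = card (B \<inter> S) + card (B - S)"
    by (rule card_Int_Diff)
  moreover have "card K \<le> card (B - S)"
    using B \<open>K \<subseteq> X - S\<close> \<open>finite B\<close> by (intro card_mono) auto
  ultimately show thesis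
    using that B card_base K by fastforce
qed

lemma rank_Un_circuit_le:
  assumes C: "circuit E indep C" and "C - Y \<noteq> {}"
  shows "rank indep (Y \<union> C) + 1 \<le> rank indep Y + card (C - Y)"
proof -
  have "indep (C \<inter> Y)"
    using circuit_psubset_indep[OF C] assms(2) by blast
  then obtain J where J: "base_of indep (Y \<union> C) J" "C \<inter> Y \<subseteq> J"
    using indep_extends_to_base by blast
  then have "indep J" "J \<subseteq> Y \<union> C"
    unfolding base_of_def by auto
  have "card (J \<inter> Y) \<le> rank indep Y"
    using card_le_rank indep_subset[OF \<open>indep J\<close>] by blast
  moreover have "\<not> C \<subseteq> J"
    using \<open>indep J\<close> circuit_not_indep[OF C] indep_subset by blast
  then have "J - Y \<subset> C - Y"
    using J \<open>J \<subseteq> Y \<union> C\<close> by blast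
  then have "card (J - Y) < card (C - Y)"
    using circuit_finite[OF C] by (simp add: psubset_card_mono)
  moreover have "card J = card (J \<inter> Y) + card (J - Y)"
    using indep_finite[OF \<open>indep J\<close>] by (rule card_Int_Diff)
  ultimately show ?thesis
    using card_base[OF J(1)] by linarith
qed

lemma ear_base_Un_indep:
  assumes C: "circuit E indep C"
    and least: "\<And>D. circuit E indep D \<Longrightarrow> D \<subseteq> Y \<union> C \<Longrightarrow> D \<inter> Y \<noteq> {} \<Longrightarrow> D - Y \<noteq> {}
      \<Longrightarrow> card (C - Y) \<le> card (D - Y)"
    and K: "base_of indep Y K" and Q: "Q \<subset> C - Y"
  shows "indep (K \<union> Q)"
proof (rule ccontr)
  assume "\<not> indep (K \<union> Q)"
  have "K \<subseteq> Y" "indep K"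
    using K unfolding base_of_def by auto
  moreover have "C \<subseteq> E"
    using C unfolding circuit_def by blast
  ultimately have "K \<union> Q \<subseteq> E"
    using Q indep_subset_ground by blast
  then obtain D where D: "D \<subseteq> K \<union> Q" "circuit E indep D"
    using \<open>\<not> indep (K \<union> Q)\<close> dependent_contains_circuit by blast
  have "\<not> D \<subseteq> K"
    using D(2) circuit_not_indep indep_subset \<open>indep K\<close> by blast
  show False
  proof (cases "D \<inter> Y = {}")
    case True
    then have "D \<subset> C"
      using D(1) Q \<open>K \<subseteq> Y\<close> by blast
    then show False
      using circuit_psubset_indep[OF C] circuit_not_indep[OF D(2)] by blast
  next
    case False
    moreover have "D - Y \<noteq> {}" "D - Y \<subseteq> Q" "D \<subseteq> Y \<union> C"
      using D(1) Q \<open>K \<subseteq> Y\<close> \<open>\<not> D \<subseteq> K\<close> by blast+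
    moreover have "finite (C - Y)"
      using circuit_finite[OF C] by blast
    then have "card (D - Y) \<le> card Q" "card Q < card (C - Y)"
      using Q \<open>D - Y \<subseteq> Q\<close> by (auto intro: card_mono psubset_card_mono rev_finite_subset)
    ultimately have "card (C - Y) \<le> card Q"
      using least[OF D(2)] by fastforce
    then show False
      using \<open>card Q < card (C - Y)\<close> by linarith
  qed
qed

lemma rank_Diff_Un_ear_ge:
  assumes ear: "\<And>K Q. base_of indep Y K \<Longrightarrow> Q \<subset> P \<Longrightarrow> indep (K \<union> Q)"
    and P: "finite P" "P \<noteq> {}" "P \<inter> Y = {}"
  shows "rank indep (Y - S) + card P \<le> rank indep (Y \<union> P - S) + max (card (P \<inter> S)) 1"
proof -
  obtain Q where Q: "Q \<subset> P" "Q \<inter> S = {}" "card Q + max (card (P \<inter> S)) 1 = card P"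
    using exists_proper_subset_avoiding[OF P(1,2)] by blast
  obtain K0 where K0: "base_of indep (Y - S) K0"
    using indep_extends_to_base[OF indep_empty] by blast
  then have "indep K0" "K0 \<subseteq> Y - S"
    unfolding base_of_def by auto
  then obtain K where "base_of indep Y K" "K0 \<subseteq> K"
    using indep_extends_to_base by blast
  then have "indep (K0 \<union> Q)"
    using ear[OF _ Q(1)] indep_subset[of "K \<union> Q" "K0 \<union> Q"] by blast
  moreover have "K0 \<union> Q \<subseteq> Y \<union> P - S"
    using \<open>K0 \<subseteq> Y - S\<close> Q by blast
  ultimately have "card (K0 \<union> Q) \<le> rank indep (Y \<union> P - S)"
    by (rule card_le_rank)
  moreover have "K0 \<inter> Q = {}"
    using \<open>K0 \<subseteq> Y - S\<close> Q(1) P(3) by blast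
  then have "card (K0 \<union> Q) = card K0 + card Q"
    using indep_finite[OF \<open>indep K0\<close>] finite_subset[OF psubset_imp_subset[OF Q(1)] P(1)]
    by (simp add: card_Un_disjoint)
  ultimately show ?thesis
    using card_base[OF K0] Q(3) by linarith
qed

lemma connected_set_exists_ear:
  assumes X: "connected_set E indep X" and Y: "Y \<subseteq> X" "Y \<noteq> {}" "Y \<noteq> X"
  obtains C where "circuit E indep C" "C \<subseteq> X" "C \<inter> Y \<noteq> {}" "C - Y \<noteq> {}"
    "\<And>D. circuit E indep D \<Longrightarrow> D \<subseteq> Y \<union> C \<Longrightarrow> D \<inter> Y \<noteq> {} \<Longrightarrow> D - Y \<noteq> {}
      \<Longrightarrow> card (C - Y) \<le> card (D - Y)"
proof -
  define ear where "ear C \<longleftrightarrow> circuit E indep C \<and> C \<subseteq> X \<and> C \<inter> Y \<noteq> {} \<and> C - Y \<noteq> {}" for C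
  obtain e f where "e \<in> Y" "f \<in> X - Y"
    using Y by blast
  moreover have "e \<noteq> f"
    using calculation by blast
  ultimately obtain C0 where "circuit E indep C0" "C0 \<subseteq> X" "e \<in> C0" "f \<in> C0"
    using X Y(1) unfolding connected_set_def by blast
  then have "ear C0"
    unfolding ear_def using \<open>e \<in> Y\<close> \<open>f \<in> X - Y\<close> by blast
  then obtain C where C: "ear C" and least: "\<And>D. ear D \<Longrightarrow> card (C - Y) \<le> card (D - Y)"
    using ex_has_least_nat[of ear C0 "\<lambda>C. card (C - Y)"] by blast
  show thesis
  proof (rule that)
    fix D
    assume "circuit E indep D" "D \<subseteq> Y \<union> C" "D \<inter> Y \<noteq> {}" "D - Y \<noteq> {}"
    moreover have "D \<subseteq> X"
      using \<open>D \<subseteq> Y \<union> C\<close> Y(1) C unfolding ear_def by blast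
    ultimately show "card (C - Y) \<le> card (D - Y)"
      using least unfolding ear_def by blast
  qed (use C in \<open>auto simp: ear_def\<close>)
qed

end

section \<open>Graphs\<close>

lemma Vset_Un: "Vset ends (A \<union> B) = Vset ends A \<union> Vset ends B"
  unfolding Vset_def by blast

lemma Vset_mono: "A \<subseteq> B \<Longrightarrow> Vset ends A \<subseteq> Vset ends B"
  unfolding Vset_def by blast

lemma ends_subset_Vset: "e \<in> F \<Longrightarrow> ends e \<subseteq> Vset ends F"
  unfolding Vset_def by blast

lemma adj_path_meets_common_vertex:
  assumes "(u, w) \<in> (adj ends F)\<^sup>*" "u \<in> S" "w \<in> T"
    and sides: "\<forall>e\<in>F. ends e \<subseteq> S \<or> ends e \<subseteq> T"
  shows "\<exists>y\<in>S \<inter> T. y \<in> insert u (Vset ends F)"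
proof -
  have "z \<in> insert u (Vset ends F) \<and> (z \<in> S \<or> (\<exists>y\<in>S \<inter> T. y \<in> insert u (Vset ends F)))"
    if "(u, z) \<in> (adj ends F)\<^sup>*" for z
    using that
  proof (induction rule: rtrancl_induct)
    case base
    then show ?case
      using assms(2) by blast
  next
    case (step y z)
    then obtain e where e: "e \<in> F" "ends e = {y, z}"
      unfolding adj_def by blast
    then have "y \<in> Vset ends F" "z \<in> Vset ends F"
      unfolding Vset_def by blast+
    then show ?case
      using step.IH sides e by blast
  qed
  from this[OF assms(1)] show ?thesis
    using assms(3) by blast
qed

lemma two_connected_split_common_vertex:
  assumes tc: "two_connected ends (Vset ends F) F"
    and two_ends: "\<forall>e\<in>F. card (ends e) = 2"
    and F: "F = A \<union> B" "A \<noteq> {}" "B \<noteq> {}"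
    and x: "x \<in> Vset ends F"
  obtains y where "y \<in> Vset ends A \<inter> Vset ends B" "y \<noteq> x"
proof -
  let ?F' = "{e\<in>F. x \<notin> ends e}"
  have sides: "\<forall>e\<in>?F'. ends e \<subseteq> Vset ends A \<or> ends e \<subseteq> Vset ends B"
    using F(1) unfolding Vset_def by blast
  have other_end: "\<exists>u\<in>ends e. u \<noteq> x" if "e \<in> F" for e
    using two_ends that by (force simp: card_2_iff)
  obtain a b where "a \<in> A" "b \<in> B"
    using F by blast
  then have "a \<in> F" "b \<in> F"
    using F(1) by blast+
  obtain u w where "u \<in> ends a" "w \<in> ends b" "u \<noteq> x" "w \<noteq> x"
    using other_end[OF \<open>a \<in> F\<close>] other_end[OF \<open>b \<in> F\<close>] by blast
  then have "u \<in> Vset ends A" "w \<in> Vset ends B" "u \<in> Vset ends F - {x}" "w \<in> Vset ends F - {x}"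
    using \<open>a \<in> A\<close> \<open>b \<in> B\<close> \<open>a \<in> F\<close> \<open>b \<in> F\<close> ends_subset_Vset[where ends = ends] by blast+
  moreover have "graph_connected ends (Vset ends F - {x}) ?F'"
    using tc x unfolding two_connected_def by blast
  ultimately have "(u, w) \<in> (adj ends ?F')\<^sup>*"
    unfolding graph_connected_def by simp
  from adj_path_meets_common_vertex[OF this \<open>u \<in> Vset ends A\<close> \<open>w \<in> Vset ends B\<close> sides]
  obtain y where "y \<in> Vset ends A \<inter> Vset ends B" "y \<in> insert u (Vset ends ?F')"
    by blast
  moreover have "y \<noteq> x"
    using calculation(2) \<open>u \<noteq> x\<close> unfolding Vset_def by blast
  ultimately show thesis
    using that by blast
qed

lemma two_connected_split_two_common_vertices:
  assumes tc: "two_connected ends (Vset ends F) F"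
    and two_ends: "\<forall>e\<in>F. card (ends e) = 2"
    and F: "F = A \<union> B" "A \<noteq> {}" "B \<noteq> {}"
  shows "2 \<le> card (Vset ends A \<inter> Vset ends B)"
proof -
  have common_sub: "Vset ends A \<inter> Vset ends B \<subseteq> Vset ends F"
    using F(1) by (auto simp: Vset_Un)
  obtain a where "a \<in> F"
    using F by blast
  then have "ends a \<noteq> {}"
    using two_ends by fastforce
  then obtain x where "x \<in> Vset ends F"
    using \<open>a \<in> F\<close> ends_subset_Vset[where ends = ends] by blast
  then obtain y where y: "y \<in> Vset ends A \<inter> Vset ends B"
    using two_connected_split_common_vertex[OF assms] by blast
  then obtain z where z: "z \<in> Vset ends A \<inter> Vset ends B" "z \<noteq> y"
    using two_connected_split_common_vertex[OF assms] common_sub by blast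
  have "finite (Vset ends A \<inter> Vset ends B)"
    using tc common_sub finite_subset unfolding two_connected_def by blast
  then have "card {y, z} \<le> card (Vset ends A \<inter> Vset ends B)"
    using y z(1) by (intro card_mono) auto
  with z(2) show ?thesis
    by simp
qed

lemma sum_deg_eq_twice_card:
  assumes "finite W" "finite P" and ends: "\<forall>e\<in>P. ends e \<subseteq> W \<and> card (ends e) = 2"
  shows "(\<Sum>v\<in>W. deg ends P v) = 2 * card P"
proof -
  have "deg ends P v = (\<Sum>e\<in>P. if v \<in> ends e then 1 else 0)" for v
    unfolding deg_def using assms(2) by (subst card_eq_sum, subst sum.inter_filter) auto
  then have "(\<Sum>v\<in>W. deg ends P v) = (\<Sum>v\<in>W. \<Sum>e\<in>P. if v \<in> ends e then 1 else 0)"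
    by simp
  also have "\<dots> = (\<Sum>e\<in>P. \<Sum>v\<in>W. if v \<in> ends e then 1 else 0)"
    by (rule sum.swap)
  also have "\<dots> = (\<Sum>e\<in>P. card (ends e))"
  proof (rule sum.cong)
    fix e
    assume "e \<in> P"
    then have "W \<inter> ends e = ends e"
      using ends by blast
    then show "(\<Sum>v\<in>W. if v \<in> ends e then 1 else 0) = card (ends e)"
      using assms(1) by (simp add: sum.If_cases)
  qed simp
  also have "\<dots> = 2 * card P"
    using ends by simp
  finally show ?thesis .
qed

lemma sum_max_deg_one:
  assumes "finite W" "finite P" and ends: "\<forall>e\<in>P. ends e \<subseteq> W \<and> card (ends e) = 2"
  shows "(\<Sum>v\<in>W. max (deg ends P v) 1) + card (Vset ends P) = 2 * card P + card W"
proof -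
  have VP: "Vset ends P \<subseteq> W"
    using ends unfolding Vset_def by blast
  have deg_zero_iff: "deg ends P v = 0 \<longleftrightarrow> v \<notin> Vset ends P" for v
    using assms(2) unfolding deg_def Vset_def by auto
  have "max (deg ends P v) 1 = deg ends P v + (if v \<in> W - Vset ends P then 1 else 0)"
    if "v \<in> W" for v
    using that deg_zero_iff[of v] by (cases "deg ends P v = 0") auto
  then have "(\<Sum>v\<in>W. max (deg ends P v) 1) = (\<Sum>v\<in>W. deg ends P v) + card (W - Vset ends P)"
    using assms(1) by (simp add: sum.distrib sum.If_cases Diff_eq Compl_eq)
  moreover have "card (W - Vset ends P) + card (Vset ends P) = card W"
    using VP assms(1) by (metis card_Diff_subset card_mono diff_add finite_subset)
  ultimately show ?thesis
    using sum_deg_eq_twice_card[OF assms] by linarith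
qed

definition incident_edges :: "('e \<Rightarrow> 'v set) \<Rightarrow> 'v \<Rightarrow> 'e set" where
  "incident_edges ends v = {e. v \<in> ends e}"

lemma deg_eq_card_Int_incident_edges: "deg ends B v = card (B \<inter> incident_edges ends v)"
  unfolding deg_def incident_edges_def by (metis Collect_conj_eq Collect_mem_eq)

lemma Diff_incident_edges_eq: "v \<notin> Vset ends Y \<Longrightarrow> Y - incident_edges ends v = Y"
  unfolding incident_edges_def Vset_def by blast

section \<open>The rank-drop sum\<close>

definition rank_drop_sum :: "('e \<Rightarrow> 'v set) \<Rightarrow> ('e set \<Rightarrow> bool) \<Rightarrow> 'e set \<Rightarrow> int" where
  "rank_drop_sum ends indep Y =
     (\<Sum>v\<in>Vset ends Y. int (rank indep Y) - int (rank indep (Y - incident_edges ends v)))"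

context finite_matroid
begin

lemma Min_deg_base_le:
  "Min {deg ends B v | B. base_of indep X B} + rank indep (X - incident_edges ends v)
     \<le> rank indep X"
proof -
  obtain B where B: "base_of indep X B"
    "card (B \<inter> incident_edges ends v) + rank indep (X - incident_edges ends v) \<le> rank indep X"
    using exists_base_card_Int_le .
  have "{deg ends B v | B. base_of indep X B} \<subseteq> (\<lambda>B. deg ends B v) ` Pow E"
    unfolding base_of_def using indep_subset_ground by (auto intro: rev_image_eqI)
  then have "finite {deg ends B v | B. base_of indep X B}"
    using finite_ground finite_subset by blast
  then have "Min {deg ends B v | B. base_of indep X B} \<le> deg ends B v"
    using B(1) by (intro Min_le) auto
  then show ?thesis
    using B(2) unfolding deg_eq_card_Int_incident_edges by linarith
qed

lemma sum_Min_deg_le_rank_drop_sum: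
  "int (\<Sum>v\<in>Vset ends X. Min {deg ends B v | B. base_of indep X B}) \<le> rank_drop_sum ends indep X"
  unfolding rank_drop_sum_def of_nat_sum
proof (rule sum_mono)
  fix v
  show "int (Min {deg ends B v | B. base_of indep X B})
    \<le> int (rank indep X) - int (rank indep (X - incident_edges ends v))"
    using Min_deg_base_le[of ends v X] by linarith
qed

end

lemma ear_step_arith:
  fixes F F' n rX rY p vY vP :: int
  assumes "F' \<le> F + n * (rX - rY - p + 1) + 2 * p - vP"
    and "F \<le> 2 * (rY + 1) - vY" and "n + 2 \<le> vY + vP" and "rX + 1 \<le> rY + p" and "2 \<le> n"
  shows "F' \<le> 2 * (rX + 1) - n"
proof -
  have "0 \<le> (n - 2) * (rY + p - rX - 1)"
    using assms(4,5) by simp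
  then show ?thesis
    using assms(1-3) by (simp add: algebra_simps)
qed

locale two_connected_circuits = finite_matroid E indep
  for E :: "'e set" and indep :: "'e set \<Rightarrow> bool" +
  fixes ends :: "'e \<Rightarrow> 'v set"
  assumes card_ends: "e \<in> E \<Longrightarrow> card (ends e) = 2"
    and circuit_two_connected: "circuit E indep C \<Longrightarrow> two_connected ends (Vset ends C) C"
begin

lemma finite_Vset: "Y \<subseteq> E \<Longrightarrow> finite (Vset ends Y)"
  unfolding Vset_def using finite_ground card_ends
  by (metis card.infinite finite_UN_I finite_subset subsetD zero_neq_numeral)

lemma indep_singleton:
  assumes "e \<in> E"
  shows "indep {e}"
proof (rule ccontr)
  assume "\<not> indep {e}"
  then have "circuit E indep {e}"
    unfolding circuit_def using assms indep_empty by (auto simp: subset_singleton_iff)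
  then have "3 \<le> card (Vset ends {e})"
    using circuit_two_connected unfolding two_connected_def by blast
  then show False
    using card_ends[OF assms] by (simp add: Vset_def)
qed

lemma rank_drop_sum_singleton:
  assumes "e \<in> E"
  shows "rank_drop_sum ends indep {e} \<le> 2 * (int (rank indep {e}) + 1) - int (card (Vset ends {e}))"
proof -
  have "base_of indep {e} {e}" "base_of indep {} {}"
    unfolding base_of_def using indep_singleton[OF assms] indep_empty by auto
  then have "rank indep {e} = 1" "rank indep {} = 0"
    using card_base by fastforce+
  moreover have "{e} - incident_edges ends v = {}" if "v \<in> ends e" for v
    using that unfolding incident_edges_def by blast
  ultimately have "rank_drop_sum ends indep {e} = int (card (ends e))"
    unfolding rank_drop_sum_def by (simp add: Vset_def)
  then show ?thesis
    using card_ends[OF assms] \<open>rank indep {e} = 1\<close> by (simp add: Vset_def)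
qed

lemma rank_drop_sum_Un_ear_le:
  assumes Y: "Y \<subseteq> E" and P: "P \<subseteq> E" "P \<noteq> {}" "P \<inter> Y = {}"
    and ear: "\<And>K Q. base_of indep Y K \<Longrightarrow> Q \<subset> P \<Longrightarrow> indep (K \<union> Q)"
  shows "rank_drop_sum ends indep (Y \<union> P) \<le> rank_drop_sum ends indep Y
    + int (card (Vset ends (Y \<union> P))) * (int (rank indep (Y \<union> P)) - int (rank indep Y) - int (card P) + 1)
    + 2 * int (card P) - int (card (Vset ends P))"
proof -
  let ?W = "Vset ends (Y \<union> P)"
  let ?c = "int (rank indep (Y \<union> P)) - int (rank indep Y) - int (card P) + 1"
  let ?d = "\<lambda>v. int (max (deg ends P v) 1)"
  let ?h = "\<lambda>v. int (rank indep Y) - int (rank indep (Y - incident_edges ends v))"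
  have finite: "finite ?W" "finite P"
    using finite_Vset[of "Y \<union> P"] finite_subset[OF P(1) finite_ground] Y P(1) by simp_all
  have "int (rank indep (Y \<union> P)) - int (rank indep (Y \<union> P - incident_edges ends v))
      \<le> ?c + (?d v - 1) + ?h v" for v
    using rank_Diff_Un_ear_ge[OF ear finite(2) P(2,3), of "incident_edges ends v"]
    unfolding deg_eq_card_Int_incident_edges by linarith
  then have "rank_drop_sum ends indep (Y \<union> P) \<le> (\<Sum>v\<in>?W. ?c + (?d v - 1) + ?h v)"
    unfolding rank_drop_sum_def by (rule sum_mono)
  also have "\<dots> = int (card ?W) * ?c + (\<Sum>v\<in>?W. ?d v) - int (card ?W) + (\<Sum>v\<in>?W. ?h v)"
    by (simp add: sum.distrib sum_subtractf algebra_simps)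
  finally have sum_le: "rank_drop_sum ends indep (Y \<union> P)
      \<le> int (card ?W) * ?c + (\<Sum>v\<in>?W. ?d v) - int (card ?W) + (\<Sum>v\<in>?W. ?h v)" .
  have "(\<Sum>v\<in>?W. ?h v) = rank_drop_sum ends indep Y"
    unfolding rank_drop_sum_def
    using finite(1) Vset_mono[of Y "Y \<union> P" ends]
    by (intro sum.mono_neutral_right) (auto simp: Diff_incident_edges_eq)
  moreover have "(\<Sum>v\<in>?W. ?d v) + int (card (Vset ends P)) = 2 * int (card P) + int (card ?W)"
  proof -
    have "\<forall>e\<in>P. ends e \<subseteq> ?W \<and> card (ends e) = 2"
      using P(1) card_ends ends_subset_Vset[of _ "Y \<union> P" ends] by blast
    from sum_max_deg_one[OF finite this] show ?thesis
      unfolding of_nat_sum[symmetric] of_nat_add[symmetric] by simp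
  qed
  ultimately show ?thesis
    using sum_le by linarith
qed

lemma two_le_card_Vset_ear_Int:
  assumes Y: "Y \<subseteq> E" and C: "circuit E indep C" "C \<inter> Y \<noteq> {}" "C - Y \<noteq> {}"
  shows "2 \<le> card (Vset ends (C - Y) \<inter> Vset ends Y)"
proof -
  have CE: "C \<subseteq> E"
    using C(1) unfolding circuit_def by blast
  then have "\<forall>e\<in>C. card (ends e) = 2"
    using card_ends by blast
  moreover have "C = (C - Y) \<union> (C \<inter> Y)"
    by blast
  ultimately have "2 \<le> card (Vset ends (C - Y) \<inter> Vset ends (C \<inter> Y))"
    using two_connected_split_two_common_vertices circuit_two_connected[OF C(1)] C(2,3) by metis
  also have "\<dots> \<le> card (Vset ends (C - Y) \<inter> Vset ends Y)"
    using finite_Vset[of "C - Y"] CE Vset_mono[of "C \<inter> Y" Y ends] by (intro card_mono) auto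
  finally show ?thesis .
qed

lemma rank_drop_sum_bound_Un_ear:
  assumes Y: "Y \<subseteq> E"
    and C: "circuit E indep C" "C \<inter> Y \<noteq> {}" "C - Y \<noteq> {}"
    and least: "\<And>D. circuit E indep D \<Longrightarrow> D \<subseteq> Y \<union> C \<Longrightarrow> D \<inter> Y \<noteq> {} \<Longrightarrow> D - Y \<noteq> {}
      \<Longrightarrow> card (C - Y) \<le> card (D - Y)"
    and bound: "rank_drop_sum ends indep Y \<le> 2 * (int (rank indep Y) + 1) - int (card (Vset ends Y))"
  shows "rank_drop_sum ends indep (Y \<union> C)
    \<le> 2 * (int (rank indep (Y \<union> C)) + 1) - int (card (Vset ends (Y \<union> C)))"
proof -
  define P where "P = C - Y"
  have YP: "Y \<union> C = Y \<union> P" and P: "P \<subseteq> E" "P \<noteq> {}" "P \<inter> Y = {}"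
    using C unfolding P_def circuit_def by blast+
  have finite: "finite (Vset ends Y)" "finite (Vset ends P)"
    using finite_Vset Y P(1) by blast+
  have common: "2 \<le> card (Vset ends P \<inter> Vset ends Y)"
    unfolding P_def using two_le_card_Vset_ear_Int[OF Y C] .
  have "card (Vset ends (Y \<union> P)) + card (Vset ends P \<inter> Vset ends Y)
      = card (Vset ends Y) + card (Vset ends P)"
    using card_Un_Int[OF finite] by (simp add: Vset_Un Int_commute)
  moreover have "card (Vset ends P \<inter> Vset ends Y) \<le> card (Vset ends (Y \<union> P))"
    using finite by (intro card_mono) (auto simp: Vset_Un)
  ultimately have vertices: "int (card (Vset ends (Y \<union> P))) + 2
      \<le> int (card (Vset ends Y)) + int (card (Vset ends P))"
    "2 \<le> int (card (Vset ends (Y \<union> P)))"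
    using common by linarith+
  have "int (rank indep (Y \<union> P)) + 1 \<le> int (rank indep Y) + int (card P)"
    using rank_Un_circuit_le[OF C(1,3)] unfolding YP P_def by linarith
  moreover have "rank_drop_sum ends indep (Y \<union> P) \<le> rank_drop_sum ends indep Y
    + int (card (Vset ends (Y \<union> P))) * (int (rank indep (Y \<union> P)) - int (rank indep Y) - int (card P) + 1)
    + 2 * int (card P) - int (card (Vset ends P))"
    using ear_base_Un_indep[OF C(1) least] Y P unfolding P_def by (intro rank_drop_sum_Un_ear_le)
  ultimately show ?thesis
    unfolding YP using ear_step_arith[OF _ bound vertices(1)] vertices(2) by blast
qed

lemma rank_drop_sum_bound_grow:
  assumes X: "connected_set E indep X" and "Y \<subseteq> X" "Y \<noteq> {}"
    and "rank_drop_sum ends indep Y \<le> 2 * (int (rank indep Y) + 1) - int (card (Vset ends Y))"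
  shows "rank_drop_sum ends indep X \<le> 2 * (int (rank indep X) + 1) - int (card (Vset ends X))"
  using assms(2-4)
proof (induction "card (X - Y)" arbitrary: Y rule: less_induct)
  case less
  show ?case
  proof (cases "Y = X")
    case True
    then show ?thesis
      using less.prems by simp
  next
    case False
    obtain C where C: "circuit E indep C" "C \<subseteq> X" "C \<inter> Y \<noteq> {}" "C - Y \<noteq> {}"
      and least: "\<And>D. circuit E indep D \<Longrightarrow> D \<subseteq> Y \<union> C \<Longrightarrow> D \<inter> Y \<noteq> {} \<Longrightarrow> D - Y \<noteq> {}
        \<Longrightarrow> card (C - Y) \<le> card (D - Y)"
      using connected_set_exists_ear[OF X less.prems(1,2) False] by blast
    have XE: "X \<subseteq> E"
      using X unfolding connected_set_def by blast
    have "X - (Y \<union> C) \<subset> X - Y"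
      using C(2,4) by blast
    then have "card (X - (Y \<union> C)) < card (X - Y)"
      using finite_subset[OF XE finite_ground] by (simp add: psubset_card_mono)
    moreover have "rank_drop_sum ends indep (Y \<union> C)
        \<le> 2 * (int (rank indep (Y \<union> C)) + 1) - int (card (Vset ends (Y \<union> C)))"
      using rank_drop_sum_bound_Un_ear[OF _ C(1,3,4) least less.prems(3)] less.prems(1) XE by blast
    ultimately show ?thesis
      using less.hyps[of "Y \<union> C"] less.prems(1,2) C(2) by blast
  qed
qed

lemma rank_drop_sum_connected_le:
  assumes "connected_set E indep X"
  shows "rank_drop_sum ends indep X \<le> 2 * (int (rank indep X) + 1) - int (card (Vset ends X))"
proof (cases "X = {}")
  case True
  then show ?thesis
    unfolding rank_drop_sum_def Vset_def by simp
next
  case False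
  then obtain e where "e \<in> X"
    by blast
  moreover have "e \<in> E"
    using assms \<open>e \<in> X\<close> unfolding connected_set_def by blast
  ultimately show ?thesis
    using rank_drop_sum_bound_grow[OF assms, of "{e}"] rank_drop_sum_singleton by blast
qed

end

theorem lemma5p5:
  fixes V :: "'v set" and E :: "'e set" and ends :: "'e \<Rightarrow> 'v set"
    and indep :: "'e set \<Rightarrow> bool" and X :: "'e set"
  assumes "graph V E ends"
    and "matroid E indep"
    and "\<And>C. circuit E indep C \<Longrightarrow> two_connected ends (Vset ends C) C"
    and "connected_set E indep X"
  shows "int (\<Sum>v\<in>Vset ends X. Min {deg ends B v | B. base_of indep X B})
           \<le> 2 * (int (rank indep X) + 1) - int (card (Vset ends X))"
proof -
  interpret two_connected_circuits E indep ends
    using assms(1-3) unfolding two_connected_circuits_def two_connected_circuits_axioms_def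
      finite_matroid_def graph_def by blast
  show ?thesis
    using sum_Min_deg_le_rank_drop_sum[of ends X] rank_drop_sum_connected_le[OF assms(4)]
    by linarith
qed

end
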